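(* $\mathsf{C}_2\times\mathsf{AUC}_{[0,1]}\not\le_W\mathsf{ConC}_{[0,1]}$.
   Context: A represented space is a pair $(X,\delta_X)$ with $\delta_X:\subseteq\mathbb{N}^\mathbb{N}\to X$ a partial surjection; $[0,1]$ carries its Cauchy representation. A realizer of $f:\subseteq X\rightrightarrows Y$ is a partial $F$ with $\delta_Y F(p)\in f(\delta_X(p))$ for all $p\in\mathrm{dom}(f\circ\delta_X)$. $f\le_W g$ if there are computable partial $H,K:\subseteq\mathbb{N}^\mathbb{N}\to\mathbb{N}^\mathbb{N}$ such that $p\mapsto H\langle p,GK(p)\rangle$ realizes $f$ for every realizer $G$ of $g$. $f\times g$ denotes $(x,z)\mapsto f(x)\times g(z)$. $\mathcal{A}_-(X)$ denotes closed subsets represented by negative information (for $\{0,1\}$: a name enumerates the complement; for $[0,1]$: a name enumerates rational open intervals whose union is the complement). Closed choice $\mathsf C_X:\subseteq\mathcal A_-(X)\rightrightarrows X$, $A\mapsto A$, is defined on nonempty $A$; $\mathsf C_2$ is closed choice on $\{0,1\}$. $\mathsf{AUC}_{[0,1]}$ is $\mathsf C_{[0,1]}$ restricted to the sets $[0,1]$ and $\{x\}$, $x\in[0,1]$. $\mathsf{ConC}_{[0,1]}$ is $\mathsf C_{[0,1]}$ restricted to intervals $[a,b]$, $0\le a\le b\le1$. *)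

theory Defs
  imports Complex_Main "HOL-Library.Nat_Bijection"
begin

text \<open>recfn n f: f, restricted to argument lists of length n, is a total recursive
  function of arity n.\<close>

inductive recfn :: "nat \<Rightarrow> (nat list \<Rightarrow> nat) \<Rightarrow> bool" where
  rf_zero: "recfn n (\<lambda>_. 0)"
| rf_succ: "recfn 1 (\<lambda>xs. Suc (hd xs))"
| rf_proj: "i < n \<Longrightarrow> recfn n (\<lambda>xs. xs ! i)"
| rf_comp: "recfn m f \<Longrightarrow> length gs = m \<Longrightarrow> (\<forall>g\<in>set gs. recfn n g)
            \<Longrightarrow> recfn n (\<lambda>xs. f (map (\<lambda>g. g xs) gs))"
| rf_prim: "recfn n f \<Longrightarrow> recfn (Suc (Suc n)) g
            \<Longrightarrow> recfn (Suc n) (\<lambda>xs. rec_nat (f (tl xs)) (\<lambda>y r. g (y # r # tl xs)) (hd xs))"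
| rf_mu: "recfn (Suc n) f \<Longrightarrow> (\<forall>xs. length xs = n \<longrightarrow> (\<exists>y. f (y # xs) = 0))
            \<Longrightarrow> recfn n (\<lambda>xs. LEAST y. f (y # xs) = 0)"

type_synonym baire = "nat \<Rightarrow> nat"

text \<open>F is computable iff some total recursive g, on input (n, code of a prefix of p),
  returns 0 (no answer yet) or Suc of the n-th output symbol; for every p in the
  domain of F an answer eventually appears and all answers are correct.\<close>

definition computable :: "(baire \<Rightarrow> baire option) \<Rightarrow> bool" where
  "computable F \<longleftrightarrow> (\<exists>g. recfn 1 g \<and>
     (\<forall>p q. F p = Some q \<longrightarrow> (\<forall>n.
        (\<exists>k. 0 < g [prod_encode (n, list_encode (map p [0..<k]))]) \<and>
        (\<forall>k. 0 < g [prod_encode (n, list_encode (map p [0..<k]))] \<longrightarrow>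
              g [prod_encode (n, list_encode (map p [0..<k]))] = Suc (q n)))))"

definition bpair :: "baire \<Rightarrow> baire \<Rightarrow> baire" where
  "bpair p q = (\<lambda>n. if even n then p (n div 2) else q (n div 2))"

type_synonym 'a rep = "baire \<Rightarrow> 'a option"

text \<open>Multivalued partial functions f : X \<rightrightarrows> Y are 'a \<Rightarrow> 'b set, dom f = {x. f x \<noteq> {}}.\<close>

definition realizer :: "'a rep \<Rightarrow> 'b rep \<Rightarrow> ('a \<Rightarrow> 'b set) \<Rightarrow> (baire \<Rightarrow> baire option) \<Rightarrow> bool" where
  "realizer dX dY f F \<longleftrightarrow> (\<forall>p x. dX p = Some x \<and> f x \<noteq> {} \<longrightarrow>
      (\<exists>q y. F p = Some q \<and> dY q = Some y \<and> y \<in> f x))"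

definition weihrauch_le ::
  "'a rep \<Rightarrow> 'b rep \<Rightarrow> ('a \<Rightarrow> 'b set) \<Rightarrow> 'c rep \<Rightarrow> 'd rep \<Rightarrow> ('c \<Rightarrow> 'd set) \<Rightarrow> bool" where
  "weihrauch_le dX dY f dZ dW g \<longleftrightarrow> (\<exists>H K. computable H \<and> computable K \<and>
     (\<forall>G. realizer dZ dW g G \<longrightarrow>
        realizer dX dY f (\<lambda>p. Option.bind (K p) (\<lambda>k. Option.bind (G k) (\<lambda>r. H (bpair p r))))))"

definition rep_prod :: "'a rep \<Rightarrow> 'b rep \<Rightarrow> ('a \<times> 'b) rep" where
  "rep_prod d1 d2 r = (case (d1 (\<lambda>n. r (2*n)), d2 (\<lambda>n. r (2*n+1))) of
       (Some a, Some b) \<Rightarrow> Some (a, b) | _ \<Rightarrow> None)"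

definition mv_prod :: "('a \<Rightarrow> 'b set) \<Rightarrow> ('c \<Rightarrow> 'd set) \<Rightarrow> ('a \<times> 'c \<Rightarrow> ('b \<times> 'd) set)" where
  "mv_prod f g = (\<lambda>(x, z). f x \<times> g z)"

definition delta_2 :: "nat rep" where
  "delta_2 p = (if p 0 \<le> 1 then Some (p 0) else None)"

text \<open>Negative information on {0,1}: p(n) = Suc k enumerates k into the complement.\<close>
definition delta_A2 :: "nat set rep" where
  "delta_A2 p = Some ({0, 1} - {k. \<exists>n. p n = Suc k})"

definition nu_Q :: "nat \<Rightarrow> real" where
  "nu_Q n = (case prod_decode n of (i, j) \<Rightarrow> of_int (int_decode i) / of_nat (Suc j))"

definition delta_I :: "real rep" where
  "delta_I p = (if \<exists>x\<in>{0..1}. \<forall>n. \<bar>nu_Q (p n) - x\<bar> \<le> (1/2)^n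
                then Some (THE x. x \<in> {0..1} \<and> (\<forall>n. \<bar>nu_Q (p n) - x\<bar> \<le> (1/2)^n))
                else None)"

definition rat_interval :: "nat \<Rightarrow> real set" where
  "rat_interval k = (case prod_decode k of (i, j) \<Rightarrow> {nu_Q i <..< nu_Q j})"

text \<open>Negative information on [0,1]: p(n) = Suc k enumerates the rational open
  interval with code k; the named set is [0,1] minus the union.\<close>
definition delta_AI :: "real set rep" where
  "delta_AI p = Some ({0..1} - (\<Union>n\<in>{n. p n \<noteq> 0}. rat_interval (p n - 1)))"

definition C_choice :: "'a set \<Rightarrow> 'a set" where
  "C_choice A = A"

abbreviation C2 :: "nat set \<Rightarrow> nat set" where
  "C2 \<equiv> C_choice"

definition AUC_I :: "real set \<Rightarrow> real set" where
  "AUC_I A = (if A = {0..1} \<or> (\<exists>x\<in>{0..1}. A = {x}) then A else {})"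

definition ConC_I :: "real set \<Rightarrow> real set" where
  "ConC_I A = (if \<exists>a b. 0 \<le> a \<and> a \<le> b \<and> b \<le> 1 \<and> A = {a..b} then A else {})"

end

theory Submission
  imports Defs "HOL-Analysis.Analysis"
begin

text \<open>Suppose computable H, K reduce C_2 \<times> AUC_[0,1] to ConC_[0,1]. On the name p_full of
  ({0,1}, [0,1]) the forward map K yields an interval J, and feeding the standard name of y \<in> J as
  the ConC answer makes H output a bit and a real X y. Fix z \<in> [0,1]. Names of ({0,1}, {z}) agreeing
  with p_full on longer and longer prefixes are sent by K to intervals whose limit points lie in J,
  and continuity of H forces X y = z for every y lying in infinitely many of them. Excluding the bit
  b late in these names yields intervals that are almost inside the previous ones, and their limit
  points y_b carry a bit different from b. Hence y_0 \<noteq> y_1 and X is constantly z between them, so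
  every z \<in> [0,1] is a value of X at a rational, contradicting uncountability.\<close>

section \<open>Convergence in Baire space and continuity of computable maps\<close>

abbreviation agree_upto :: "nat \<Rightarrow> baire \<Rightarrow> baire \<Rightarrow> bool" where
  "agree_upto m p q \<equiv> \<forall>i<m. p i = q i"

definition baire_lim :: "(nat \<Rightarrow> baire) \<Rightarrow> baire \<Rightarrow> bool" where
  "baire_lim P p \<longleftrightarrow> (\<forall>n. \<forall>\<^sub>F j in sequentially. P j n = p n)"

lemma baire_lim_agree_upto:
  assumes "baire_lim P p"
  shows "\<forall>\<^sub>F j in sequentially. agree_upto m (P j) p"
proof -
  have "\<forall>\<^sub>F j in sequentially. \<forall>i\<in>{..<m}. P j i = p i"
    using assms unfolding baire_lim_def by (intro eventually_ball_finite) auto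
  then show ?thesis by (rule eventually_mono) simp
qed

lemma baire_limI: "(\<And>j. agree_upto j (P j) p) \<Longrightarrow> baire_lim P p"
  unfolding baire_lim_def eventually_sequentially by (meson Suc_le_lessD)

lemma baire_lim_const: "baire_lim (\<lambda>_. p) p"
  by (simp add: baire_lim_def)

lemma agree_upto_bpair:
  "agree_upto m p p' \<Longrightarrow> agree_upto m r r' \<Longrightarrow> agree_upto m (bpair p r) (bpair p' r')"
  unfolding bpair_def by auto

lemma baire_lim_bpair:
  assumes "baire_lim P p" "baire_lim R r"
  shows "baire_lim (\<lambda>j. bpair (P j) (R j)) (bpair p r)"
  unfolding baire_lim_def
proof
  fix n
  show "\<forall>\<^sub>F j in sequentially. bpair (P j) (R j) n = bpair p r n"
    using assms unfolding baire_lim_def bpair_def by (cases "even n") auto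
qed

lemma computable_baire_lim:
  assumes F: "computable F" and P: "baire_lim P p" and q: "F p = Some q"
    and Q: "\<forall>\<^sub>F j in sequentially. F (P j) = Some (Q j)"
  shows "baire_lim Q q"
  unfolding baire_lim_def
proof
  fix n
  from F obtain g where g: "\<forall>p q. F p = Some q \<longrightarrow> (\<forall>n.
        (\<exists>k. 0 < g [prod_encode (n, list_encode (map p [0..<k]))]) \<and>
        (\<forall>k. 0 < g [prod_encode (n, list_encode (map p [0..<k]))] \<longrightarrow>
              g [prod_encode (n, list_encode (map p [0..<k]))] = Suc (q n)))"
    unfolding computable_def by blast
  from g q obtain k where k: "0 < g [prod_encode (n, list_encode (map p [0..<k]))]" by blast
  have "Q j n = q n" if "agree_upto k (P j) p" "F (P j) = Some (Q j)" for j
  proof -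
    have "map (P j) [0..<k] = map p [0..<k]" using that(1) by simp
    then show ?thesis using g k q that(2) by (metis Suc_inject)
  qed
  then show "\<forall>\<^sub>F j in sequentially. Q j n = q n"
    using baire_lim_agree_upto[OF P, of k] Q by (auto elim: eventually_elim2)
qed

section \<open>Cauchy names\<close>

lemma nu_Q_surj:
  assumes "q \<in> \<rat>"
  shows "\<exists>c. nu_Q c = q"
proof -
  from assms obtain a b where b: "0 < b" and q: "q = of_int a / of_int b" by (rule Rats_cases')
  have "nu_Q (prod_encode (int_encode a, nat b - 1)) = of_int a / of_nat (Suc (nat b - 1))"
    by (simp add: nu_Q_def)
  also have "of_nat (Suc (nat b - 1)) = (of_int b :: real)" using b by simp
  finally show ?thesis using q by blast
qed

lemma nu_Q_dense: "x < y \<Longrightarrow> \<exists>c. x < nu_Q c \<and> nu_Q c < y"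
  using Rats_dense_in_real nu_Q_surj by metis

definition std_name :: "real \<Rightarrow> baire" where
  "std_name y n = (SOME c. \<bar>nu_Q c - y\<bar> < (1/2)^n)"

lemma std_name_approx: "\<bar>nu_Q (std_name y n) - y\<bar> < (1/2)^n"
proof -
  obtain c where "y - (1/2)^n < nu_Q c" "nu_Q c < y + (1/2)^n"
    using nu_Q_dense[of "y - (1/2)^n" "y + (1/2)^n"] by auto
  then have "\<exists>c. \<bar>nu_Q c - y\<bar> < (1/2)^n" by (metis abs_diff_less_iff)
  then show ?thesis unfolding std_name_def by (rule someI_ex)
qed

lemma eq_if_dist_le_pow_half:
  fixes x y :: real
  assumes "\<And>n. \<bar>x - y\<bar> \<le> 2 * (1/2)^n"
  shows "x = y"
proof (rule ccontr)
  assume "x \<noteq> y"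
  then obtain n where "(1/2::real)^n < \<bar>x - y\<bar>/2"
    using real_arch_pow_inv[of "\<bar>x - y\<bar>/2" "1/2"] by auto
  with assms[of n] show False by argo
qed

lemma delta_I_eq_Some_iff:
  "delta_I r = Some x \<longleftrightarrow> x \<in> {0..1} \<and> (\<forall>n. \<bar>nu_Q (r n) - x\<bar> \<le> (1/2)^n)"
proof -
  have unique: "x' = x"
    if "\<forall>n. \<bar>nu_Q (r n) - x\<bar> \<le> (1/2)^n" "\<forall>n. \<bar>nu_Q (r n) - x'\<bar> \<le> (1/2)^n" for x x'
  proof (rule eq_if_dist_le_pow_half)
    fix n show "\<bar>x' - x\<bar> \<le> 2 * (1/2)^n" using that[THEN spec, of n] by linarith
  qed
  have named: "delta_I r = Some x" if "x \<in> {0..1}" "\<forall>n. \<bar>nu_Q (r n) - x\<bar> \<le> (1/2)^n" for x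
    unfolding delta_I_def using that unique by (auto intro!: the_equality)
  show ?thesis
  proof
    assume "delta_I r = Some x"
    moreover from this obtain x0 where "x0 \<in> {0..1}" "\<forall>n. \<bar>nu_Q (r n) - x0\<bar> \<le> (1/2)^n"
      unfolding delta_I_def by (auto split: if_splits)
    ultimately show "x \<in> {0..1} \<and> (\<forall>n. \<bar>nu_Q (r n) - x\<bar> \<le> (1/2)^n)"
      using named by force
  qed (use named in blast)
qed

lemma delta_I_std_name: "y \<in> {0..1} \<Longrightarrow> delta_I (std_name y) = Some y"
  using std_name_approx by (auto simp: delta_I_eq_Some_iff less_imp_le)

definition near_name :: "real \<Rightarrow> real \<Rightarrow> baire" where
  "near_name v y n = (if \<bar>nu_Q (std_name v n) - y\<bar> \<le> (1/2)^n then std_name v n else std_name y n)"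

lemma delta_I_near_name: "y \<in> {0..1} \<Longrightarrow> delta_I (near_name v y) = Some y"
  using std_name_approx by (auto simp: delta_I_eq_Some_iff near_name_def less_imp_le)

lemma baire_lim_near_name:
  assumes "w \<longlonglongrightarrow> v"
  shows "baire_lim (\<lambda>j. near_name v (w j)) (std_name v)"
  unfolding baire_lim_def
proof
  fix n
  define e where "e = (1/2)^n - \<bar>nu_Q (std_name v n) - v\<bar>"
  have "e > 0" using std_name_approx[of v n] by (simp add: e_def)
  with assms have "\<forall>\<^sub>F j in sequentially. dist (w j) v < e" by (rule tendstoD)
  then show "\<forall>\<^sub>F j in sequentially. near_name v (w j) n = std_name v n"
    by (rule eventually_mono) (auto simp: near_name_def e_def dist_real_def)
qed

section \<open>Closed subsets of [0,1] given by negative information\<close>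

definition neg_set :: "baire \<Rightarrow> real set" where
  "neg_set k = {0..1} - (\<Union>n\<in>{n. k n \<noteq> 0}. rat_interval (k n - 1))"

lemma delta_AI_neg_set: "delta_AI k = Some (neg_set k)"
  by (simp add: delta_AI_def neg_set_def)

lemma neg_set_subset: "neg_set k \<subseteq> {0..1}"
  by (auto simp: neg_set_def)

lemma open_rat_interval: "open (rat_interval c)"
  by (simp add: rat_interval_def split: prod.split)

lemma closed_neg_set: "closed (neg_set k)"
  unfolding neg_set_def by (intro closed_Diff open_UN ballI open_rat_interval) simp

text \<open>Away from the set named at p, [0,1] is covered by finitely many of the enumerated
  intervals, and inputs close to p enumerate them as well.\<close>
lemma computable_neg_set_near:
  assumes K: "computable K" and P: "baire_lim P p" and k: "K p = Some k"
    and k': "\<forall>\<^sub>F j in sequentially. K (P j) = Some (k' j)" and "e > 0"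
  shows "\<forall>\<^sub>F j in sequentially. \<forall>y\<in>neg_set (k' j). \<exists>u\<in>neg_set k. \<bar>y - u\<bar> < e"
proof -
  define S where "S = {0..1} \<inter> (\<Inter>u\<in>neg_set k. - ball u e)"
  have "compact S" unfolding S_def
    by (intro compact_Int_closed compact_Icc closed_INT) auto
  moreover have "S \<subseteq> (\<Union>n\<in>{n. k n \<noteq> 0}. rat_interval (k n - 1))"
    using \<open>e > 0\<close> unfolding S_def neg_set_def by force
  ultimately obtain F where F: "F \<subseteq> {n. k n \<noteq> 0}" "finite F" "S \<subseteq> (\<Union>n\<in>F. rat_interval (k n - 1))"
    using compactE_image[of S "{n. k n \<noteq> 0}" "\<lambda>n. rat_interval (k n - 1)"] open_rat_interval
    by blast
  have "baire_lim k' k" using K P k k' by (rule computable_baire_lim[of K])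
  then have "\<forall>\<^sub>F j in sequentially. \<forall>n\<in>F. k' j n = k n"
    unfolding baire_lim_def using F(2) by (simp add: eventually_ball_finite_distrib)
  then show ?thesis
  proof (rule eventually_mono)
    fix j assume agree: "\<forall>n\<in>F. k' j n = k n"
    show "\<forall>y\<in>neg_set (k' j). \<exists>u\<in>neg_set k. \<bar>y - u\<bar> < e"
    proof (rule ballI, rule ccontr)
      fix y assume y: "y \<in> neg_set (k' j)" "\<not> (\<exists>u\<in>neg_set k. \<bar>y - u\<bar> < e)"
      have "y \<in> {0..1}" using y(1) neg_set_subset by blast
      moreover have "\<forall>u\<in>neg_set k. y \<notin> ball u e"
        using y(2) by (auto simp: dist_real_def abs_minus_commute)
      ultimately have "y \<in> S" unfolding S_def by blast
      then obtain n where n: "n \<in> F" "y \<in> rat_interval (k n - 1)" using F(3) by blast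
      then have "k' j n \<noteq> 0" "y \<in> rat_interval (k' j n - 1)" using agree F(1) by auto
      with y(1) show False unfolding neg_set_def by blast
    qed
  qed
qed

lemma computable_neg_set_limit:
  assumes K: "computable K" and P: "baire_lim P p" and k: "K p = Some k"
    and k': "\<forall>\<^sub>F j in sequentially. K (P j) = Some (k' j) \<and> w j \<in> neg_set (k' j)"
    and w: "w \<longlonglongrightarrow> v"
  shows "v \<in> neg_set k"
proof (rule ccontr)
  assume "v \<notin> neg_set k"
  moreover have "open (- neg_set k)" using closed_neg_set by (simp add: closed_def)
  ultimately obtain e where "e > 0" and far: "\<And>u. dist u v < e \<Longrightarrow> u \<notin> neg_set k"
    unfolding open_dist by blast
  have "\<forall>\<^sub>F j in sequentially. K (P j) = Some (k' j)" using k' by (rule eventually_mono) simp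
  with K P k have "\<forall>\<^sub>F j in sequentially. \<forall>y\<in>neg_set (k' j). \<exists>u\<in>neg_set k. \<bar>y - u\<bar> < e/2"
    using half_gt_zero[OF \<open>e > 0\<close>] by (rule computable_neg_set_near[of K])
  moreover have "\<forall>\<^sub>F j in sequentially. dist (w j) v < e/2"
    using w \<open>e > 0\<close> by (intro tendstoD) auto
  ultimately have "\<forall>\<^sub>F j in sequentially. False"
    using k'
  proof eventually_elim
    case (elim j)
    then obtain u where "u \<in> neg_set k" "\<bar>w j - u\<bar> < e/2" by blast
    moreover from this elim(2) have "dist u v < e" by (simp add: dist_real_def abs_if split: if_splits)
    ultimately show False using far by blast
  qed
  then show False by simp
qed

section \<open>Realizers of connected choice\<close>

lemma realizer_ConC_iff:
  "realizer delta_AI delta_I ConC_I G \<longleftrightarrow>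
     (\<forall>k. ConC_I (neg_set k) \<noteq> {} \<longrightarrow> (\<exists>r y. G k = Some r \<and> delta_I r = Some y \<and> y \<in> neg_set k))"
  unfolding realizer_def delta_AI_neg_set by (auto simp: ConC_I_def)

definition ConC_realizer :: "baire \<Rightarrow> baire option" where
  "ConC_realizer k =
     (if ConC_I (neg_set k) \<noteq> {} then Some (std_name (SOME y. y \<in> neg_set k)) else None)"

lemma realizer_ConC_realizer: "realizer delta_AI delta_I ConC_I ConC_realizer"
  unfolding realizer_ConC_iff
proof (intro allI impI)
  fix k assume ne: "ConC_I (neg_set k) \<noteq> {}"
  define y where "y = (SOME y. y \<in> neg_set k)"
  have "neg_set k \<noteq> {}" using ne unfolding ConC_I_def by (auto split: if_splits)
  then have "y \<in> neg_set k" unfolding y_def by (simp add: some_in_eq)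
  moreover from this have "delta_I (std_name y) = Some y"
    using neg_set_subset by (blast intro: delta_I_std_name)
  ultimately show "\<exists>r y. ConC_realizer k = Some r \<and> delta_I r = Some y \<and> y \<in> neg_set k"
    using ne unfolding ConC_realizer_def y_def by auto
qed

lemma realizer_ConC_realizer_upd:
  assumes "ConC_I (neg_set k) \<noteq> {}" "delta_I r = Some y" "y \<in> neg_set k"
  shows "realizer delta_AI delta_I ConC_I (ConC_realizer(k := Some r))"
  using assms realizer_ConC_realizer unfolding realizer_ConC_iff by auto

definition empty_enum :: baire where
  "empty_enum = (\<lambda>_. 0)"

text \<open>The delays t and s let these names start like empty_enum for as long as desired.\<close>
definition excl_name :: "nat \<Rightarrow> nat \<Rightarrow> baire" where
  "excl_name b t n = (if n < t then 0 else Suc b)"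

definition point_name :: "real \<Rightarrow> nat \<Rightarrow> baire" where
  "point_name z s n = (if n < s then 0 else if z \<notin> rat_interval (n - s) then Suc (n - s) else 0)"

lemma delta_A2_empty_enum: "delta_A2 empty_enum = Some {0, 1}"
  by (simp add: delta_A2_def empty_enum_def)

lemma delta_A2_excl_name: "delta_A2 (excl_name b t) = Some ({0, 1} - {b})"
proof -
  have "{k. \<exists>n. excl_name b t n = Suc k} = {b}"
    unfolding excl_name_def by (auto intro: exI[of _ t])
  then show ?thesis by (simp add: delta_A2_def)
qed

lemma neg_set_empty_enum: "neg_set empty_enum = {0..1}"
  by (simp add: neg_set_def empty_enum_def)

lemma rat_interval_separates:
  assumes "w \<noteq> (z::real)"
  shows "\<exists>c. w \<in> rat_interval c \<and> z \<notin> rat_interval c"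
proof -
  obtain i j where "nu_Q i < w" "w < nu_Q j" "z \<notin> {nu_Q i <..< nu_Q j}"
  proof (cases "w < z")
    case True
    obtain i where "w - 1 < nu_Q i" "nu_Q i < w" using nu_Q_dense[of "w - 1" w] by auto
    moreover obtain j where "w < nu_Q j" "nu_Q j < z" using nu_Q_dense True by blast
    ultimately show ?thesis using that by force
  next
    case False
    with assms have "z < w" by simp
    then obtain i where "z < nu_Q i" "nu_Q i < w" using nu_Q_dense by blast
    moreover obtain j where "w < nu_Q j" using nu_Q_dense[of w "w + 1"] by auto
    ultimately show ?thesis using that by force
  qed
  then show ?thesis by (intro exI[of _ "prod_encode (i, j)"]) (simp add: rat_interval_def)
qed

lemma neg_set_point_name:
  assumes "z \<in> {0..1}"
  shows "neg_set (point_name z s) = {z}"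
proof
  show "neg_set (point_name z s) \<subseteq> {z}"
  proof
    fix w assume w: "w \<in> neg_set (point_name z s)"
    show "w \<in> {z}"
    proof (rule ccontr)
      assume "w \<notin> {z}"
      then obtain c where "w \<in> rat_interval c" "z \<notin> rat_interval c"
        using rat_interval_separates by blast
      moreover from this have "point_name z s (c + s) = Suc c" by (simp add: point_name_def)
      ultimately show False using w unfolding neg_set_def
        by (metis (mono_tags, lifting) DiffD2 UN_I mem_Collect_eq diff_Suc_1 nat.distinct(1))
    qed
  qed
  show "{z} \<subseteq> neg_set (point_name z s)"
    using assms by (auto simp: neg_set_def point_name_def split: if_splits)
qed

lemma AUC_I_full: "AUC_I {0..1} = {0..1}"
  and AUC_I_point: "z \<in> {0..1} \<Longrightarrow> AUC_I {z} = {z}"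
  by (auto simp: AUC_I_def)

lemma rep_prod_bpair:
  "d1 c = Some a \<Longrightarrow> d2 e = Some b \<Longrightarrow> rep_prod d1 d2 (bpair c e) = Some (a, b)"
  by (simp add: rep_prod_def bpair_def)

definition p_full :: baire where
  "p_full = bpair empty_enum empty_enum"

definition p_point :: "real \<Rightarrow> nat \<Rightarrow> baire" where
  "p_point z s = bpair empty_enum (point_name z s)"

definition p_excl :: "real \<Rightarrow> nat \<Rightarrow> nat \<Rightarrow> nat \<Rightarrow> baire" where
  "p_excl z s b t = bpair (excl_name b t) (point_name z s)"

lemma rep_prod_p_full: "rep_prod delta_A2 delta_AI p_full = Some ({0, 1}, {0..1})"
  unfolding p_full_def
  by (simp add: rep_prod_bpair delta_A2_empty_enum delta_AI_neg_set neg_set_empty_enum)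

lemma rep_prod_p_point:
  "z \<in> {0..1} \<Longrightarrow> rep_prod delta_A2 delta_AI (p_point z s) = Some ({0, 1}, {z})"
  unfolding p_point_def
  by (simp add: rep_prod_bpair delta_A2_empty_enum delta_AI_neg_set neg_set_point_name)

lemma rep_prod_p_excl:
  "z \<in> {0..1} \<Longrightarrow> rep_prod delta_A2 delta_AI (p_excl z s b t) = Some ({0, 1} - {b}, {z})"
  unfolding p_excl_def
  by (simp add: rep_prod_bpair delta_A2_excl_name delta_AI_neg_set neg_set_point_name)

lemma baire_lim_p_point:
  assumes "\<And>j. j \<le> s j"
  shows "baire_lim (\<lambda>j. p_point z (s j)) p_full"
  unfolding p_point_def p_full_def
  by (intro baire_limI agree_upto_bpair)
     (auto simp: point_name_def empty_enum_def intro: order.strict_trans2[OF _ assms])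

lemma baire_lim_p_excl_full:
  assumes "\<And>j. j \<le> s j" "\<And>j. s j \<le> t j"
  shows "baire_lim (\<lambda>j. p_excl z (s j) b (t j)) p_full"
proof -
  have t: "j \<le> t j" for j using assms order.trans by blast
  show ?thesis
    unfolding p_excl_def p_full_def
    by (intro baire_limI agree_upto_bpair)
       (auto simp: point_name_def excl_name_def empty_enum_def
             intro: order.strict_trans2[OF _ assms(1)] order.strict_trans2[OF _ t])
qed

lemma baire_lim_p_excl_point: "baire_lim (\<lambda>t. p_excl z s b t) (p_point z s)"
  unfolding p_excl_def p_point_def
  by (intro baire_limI agree_upto_bpair) (auto simp: excl_name_def empty_enum_def)

lemma LIMSEQ_close:
  fixes f g :: "nat \<Rightarrow> real"
  assumes f: "f \<longlonglongrightarrow> l" and close: "\<And>j. \<bar>g j - f j\<bar> \<le> inverse (real (Suc j))"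
  shows "g \<longlonglongrightarrow> l"
proof (rule Lim_transform[OF f])
  have "\<forall>\<^sub>F j in sequentially. norm (g j - f j) \<le> inverse (real (Suc j))" using close by simp
  then show "(\<lambda>j. g j - f j) \<longlonglongrightarrow> 0" using LIMSEQ_inverse_real_of_nat by (rule Lim_null_comparison)
qed

lemma eventually_strictly_between:
  fixes f g :: "'a \<Rightarrow> real"
  assumes "(f \<longlongrightarrow> a) F" "(g \<longlongrightarrow> b) F" "min a b < y" "y < max a b"
  shows "\<forall>\<^sub>F x in F. min (f x) (g x) < y \<and> y < max (f x) (g x)"
  using order_tendstoD(2)[OF tendsto_min[OF assms(1,2)] assms(3)]
    order_tendstoD(1)[OF tendsto_max[OF assms(1,2)] assms(4)]
  by (rule eventually_conj)

section \<open>A hypothetical reduction\<close>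

locale ConC_reduction =
  fixes H K :: "baire \<Rightarrow> baire option"
  assumes computable_H: "computable H" and computable_K: "computable K"
    and reduces: "\<And>G. realizer delta_AI delta_I ConC_I G \<Longrightarrow>
       realizer (rep_prod delta_A2 delta_AI) (rep_prod delta_2 delta_I) (mv_prod C2 AUC_I)
         (\<lambda>p. Option.bind (K p) (\<lambda>k. Option.bind (G k) (\<lambda>r. H (bpair p r))))"
begin

lemma reduction_output:
  assumes p: "rep_prod delta_A2 delta_AI p = Some (A, Z)" and "A \<noteq> {}" "AUC_I Z \<noteq> {}"
    and G: "realizer delta_AI delta_I ConC_I G"
  shows "\<exists>k r q x. K p = Some k \<and> G k = Some r \<and> H (bpair p r) = Some q \<and>
           q 0 \<in> A \<and> delta_I (\<lambda>n. q (2*n+1)) = Some x \<and> x \<in> AUC_I Z"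
proof -
  have "mv_prod C2 AUC_I (A, Z) \<noteq> {}" using assms by (simp add: mv_prod_def C_choice_def)
  with reduces[OF G] p obtain q y where
    q: "Option.bind (K p) (\<lambda>k. Option.bind (G k) (\<lambda>r. H (bpair p r))) = Some q"
    and y: "rep_prod delta_2 delta_I q = Some y" "y \<in> mv_prod C2 AUC_I (A, Z)"
    unfolding realizer_def by blast
  from q obtain k r where "K p = Some k" "G k = Some r" "H (bpair p r) = Some q"
    by (auto simp: bind_eq_Some_conv)
  moreover from y obtain a x where
    "delta_2 (\<lambda>n. q (2*n)) = Some a" "delta_I (\<lambda>n. q (2*n+1)) = Some x" "y = (a, x)"
    unfolding rep_prod_def by (auto split: option.splits)
  moreover from this have "a = q 0" by (simp add: delta_2_def split: if_splits)
  ultimately show ?thesis using y(2) by (auto simp: mv_prod_def C_choice_def)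
qed

lemma K_names_interval:
  assumes "rep_prod delta_A2 delta_AI p = Some (A, Z)" "A \<noteq> {}" "AUC_I Z \<noteq> {}"
  shows "\<exists>k. K p = Some k \<and> ConC_I (neg_set k) \<noteq> {}"
  using reduction_output[OF assms realizer_ConC_realizer]
  by (auto simp: ConC_realizer_def split: if_splits)

lemma H_answer:
  assumes p: "rep_prod delta_A2 delta_AI p = Some (A, Z)" "A \<noteq> {}" "AUC_I Z \<noteq> {}"
    and k: "K p = Some k" and y: "y \<in> neg_set k" "delta_I r = Some y"
  shows "\<exists>q x. H (bpair p r) = Some q \<and> q 0 \<in> A \<and> delta_I (\<lambda>n. q (2*n+1)) = Some x \<and> x \<in> AUC_I Z"
proof -
  have "ConC_I (neg_set k) \<noteq> {}" using K_names_interval[OF p] k by auto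
  from reduction_output[OF p realizer_ConC_realizer_upd[OF this y(2,1)]] k show ?thesis by auto
qed

definition k_full :: baire where
  "k_full = the (K p_full)"

definition k_point :: "real \<Rightarrow> nat \<Rightarrow> baire" where
  "k_point z s = the (K (p_point z s))"

definition k_excl :: "real \<Rightarrow> nat \<Rightarrow> nat \<Rightarrow> nat \<Rightarrow> baire" where
  "k_excl z s b t = the (K (p_excl z s b t))"

definition out_full :: "real \<Rightarrow> baire" where
  "out_full y = the (H (bpair p_full (std_name y)))"

definition X :: "real \<Rightarrow> real" where
  "X y = the (delta_I (\<lambda>n. out_full y (2*n+1)))"

lemma K_p_full: "K p_full = Some k_full"
  using K_names_interval[OF rep_prod_p_full] by (auto simp: k_full_def AUC_I_full)

lemma K_p_point:
  assumes z: "z \<in> {0..1}"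
  shows "K (p_point z s) = Some (k_point z s) \<and> (\<exists>a c. neg_set (k_point z s) = {a..c})"
proof -
  have "\<exists>k. K (p_point z s) = Some k \<and> ConC_I (neg_set k) \<noteq> {}"
    by (rule K_names_interval[OF rep_prod_p_point[OF z]]) (simp_all add: AUC_I_point[OF z])
  then obtain k where "K (p_point z s) = Some k" "ConC_I (neg_set k) \<noteq> {}" by blast
  then show ?thesis unfolding k_point_def ConC_I_def by (auto split: if_splits)
qed

lemma K_p_excl:
  assumes z: "z \<in> {0..1}" and b: "b \<in> {0, 1}"
  shows "K (p_excl z s b t) = Some (k_excl z s b t) \<and> neg_set (k_excl z s b t) \<noteq> {}"
proof -
  have "{0, 1} - {b} \<noteq> {}" using b by auto
  then have "\<exists>k. K (p_excl z s b t) = Some k \<and> ConC_I (neg_set k) \<noteq> {}"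
    by (rule K_names_interval[OF rep_prod_p_excl[OF z]]) (simp add: AUC_I_point[OF z])
  then obtain k where "K (p_excl z s b t) = Some k" "ConC_I (neg_set k) \<noteq> {}" by blast
  then show ?thesis unfolding k_excl_def ConC_I_def by (auto split: if_splits)
qed

lemma out_full:
  assumes "y \<in> neg_set k_full"
  shows "H (bpair p_full (std_name y)) = Some (out_full y) \<and> out_full y 0 \<in> {0, 1} \<and>
         delta_I (\<lambda>n. out_full y (2*n+1)) = Some (X y)"
proof -
  have "delta_I (std_name y) = Some y" using assms neg_set_subset by (blast intro: delta_I_std_name)
  from H_answer[OF rep_prod_p_full _ _ K_p_full assms this] show ?thesis
    by (auto simp: out_full_def X_def AUC_I_full)
qed

lemma X_eq_at_point_limit:
  assumes z: "z \<in> {0..1}" and s: "\<And>j. j \<le> s j"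
    and y: "\<forall>\<^sub>F j in sequentially. y \<in> neg_set (k_point z (s j))"
  shows "y \<in> neg_set k_full \<and> X y = z"
proof -
  have P: "baire_lim (\<lambda>j. p_point z (s j)) p_full" using s by (rule baire_lim_p_point)
  from y have "\<forall>\<^sub>F j in sequentially.
      K (p_point z (s j)) = Some (k_point z (s j)) \<and> y \<in> neg_set (k_point z (s j))"
    by (simp add: K_p_point[OF z])
  with computable_K P K_p_full have yJ: "y \<in> neg_set k_full"
    using tendsto_const by (rule computable_neg_set_limit[of K])
  then have y01: "y \<in> {0..1}" using neg_set_subset by blast
  define Q where "Q j = the (H (bpair (p_point z (s j)) (std_name y)))" for j
  have Q: "H (bpair (p_point z (s j)) (std_name y)) = Some (Q j) \<and> delta_I (\<lambda>n. Q j (2*n+1)) = Some z"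
    if yj: "y \<in> neg_set (k_point z (s j))" for j
  proof -
    have "\<exists>q x. H (bpair (p_point z (s j)) (std_name y)) = Some q \<and> q 0 \<in> {0, 1} \<and>
            delta_I (\<lambda>n. q (2*n+1)) = Some x \<and> x \<in> AUC_I {z}"
      by (rule H_answer[OF rep_prod_p_point[OF z] _ _ K_p_point[OF z, THEN conjunct1] yj
            delta_I_std_name[OF y01]]) (simp_all add: AUC_I_point[OF z])
    then show ?thesis by (auto simp: Q_def AUC_I_point[OF z])
  qed
  have PY: "baire_lim (\<lambda>j. bpair (p_point z (s j)) (std_name y)) (bpair p_full (std_name y))"
    using P baire_lim_const by (rule baire_lim_bpair)
  from y have "\<forall>\<^sub>F j in sequentially. H (bpair (p_point z (s j)) (std_name y)) = Some (Q j)"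
    by (rule eventually_mono) (simp add: Q)
  with computable_H PY conjunct1[OF out_full[OF yJ]] have "baire_lim Q (out_full y)"
    by (rule computable_baire_lim[of H])
  have "\<bar>nu_Q (out_full y (2*n+1)) - z\<bar> \<le> (1/2)^n" for n
  proof -
    from \<open>baire_lim Q (out_full y)\<close> have "\<forall>\<^sub>F j in sequentially. Q j (2*n+1) = out_full y (2*n+1)"
      unfolding baire_lim_def by blast
    with y have "\<forall>\<^sub>F j in sequentially. y \<in> neg_set (k_point z (s j)) \<and> Q j (2*n+1) = out_full y (2*n+1)"
      by (rule eventually_conj)
    then obtain j where yj: "y \<in> neg_set (k_point z (s j))" and "Q j (2*n+1) = out_full y (2*n+1)"
      using eventually_happens' sequentially_bot by blast
    moreover have "\<bar>nu_Q (Q j (2*n+1)) - z\<bar> \<le> (1/2)^n"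
      using Q[OF yj] unfolding delta_I_eq_Some_iff by blast
    ultimately show ?thesis by simp
  qed
  then have "delta_I (\<lambda>n. out_full y (2*n+1)) = Some z" using z by (simp add: delta_I_eq_Some_iff)
  then show ?thesis using out_full[OF yJ] yJ by simp
qed

lemma bit_at_excl_limit:
  assumes z: "z \<in> {0..1}" and b: "b \<in> {0, 1}" and s: "\<And>j. j \<le> s j" and t: "\<And>j. s j \<le> t j"
    and w: "\<And>j. w j \<in> neg_set (k_excl z (s j) b (t j))" and v: "w \<longlonglongrightarrow> v"
  shows "v \<in> neg_set k_full \<and> out_full v 0 \<noteq> b"
proof -
  have P: "baire_lim (\<lambda>j. p_excl z (s j) b (t j)) p_full" using s t by (rule baire_lim_p_excl_full)
  have "\<forall>\<^sub>F j in sequentially.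
      K (p_excl z (s j) b (t j)) = Some (k_excl z (s j) b (t j)) \<and> w j \<in> neg_set (k_excl z (s j) b (t j))"
    by (simp add: w K_p_excl[OF z b])
  with computable_K P K_p_full have vJ: "v \<in> neg_set k_full"
    using v by (rule computable_neg_set_limit[of K])
  define Q where "Q j = the (H (bpair (p_excl z (s j) b (t j)) (near_name v (w j))))" for j
  have Q: "H (bpair (p_excl z (s j) b (t j)) (near_name v (w j))) = Some (Q j) \<and> Q j 0 \<noteq> b" for j
  proof -
    have "w j \<in> {0..1}" using w neg_set_subset by blast
    then have "\<exists>q x. H (bpair (p_excl z (s j) b (t j)) (near_name v (w j))) = Some q \<and>
                 q 0 \<in> {0, 1} - {b} \<and> delta_I (\<lambda>n. q (2*n+1)) = Some x \<and> x \<in> AUC_I {z}"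
      by (intro H_answer[OF rep_prod_p_excl[OF z] _ _ K_p_excl[OF z b, THEN conjunct1] w
            delta_I_near_name]) (use b in \<open>auto simp: AUC_I_point[OF z]\<close>)
    then show ?thesis by (auto simp: Q_def)
  qed
  have PR: "baire_lim (\<lambda>j. bpair (p_excl z (s j) b (t j)) (near_name v (w j))) (bpair p_full (std_name v))"
    using P baire_lim_near_name[OF v] by (rule baire_lim_bpair)
  have "\<forall>\<^sub>F j in sequentially. H (bpair (p_excl z (s j) b (t j)) (near_name v (w j))) = Some (Q j)"
    by (simp add: Q)
  with computable_H PR conjunct1[OF out_full[OF vJ]] have "baire_lim Q (out_full v)"
    by (rule computable_baire_lim[of H])
  then have "\<forall>\<^sub>F j in sequentially. Q j 0 = out_full v 0" unfolding baire_lim_def by blast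
  then obtain j where "Q j 0 = out_full v 0" using eventually_happens' sequentially_bot by blast
  then show ?thesis using Q[of j] vJ by simp
qed

lemma X_eq_between_point_limits:
  assumes z: "z \<in> {0..1}" and s: "\<And>j. j \<le> s j"
    and u: "\<And>j. u0 j \<in> neg_set (k_point z (s j))" "\<And>j. u1 j \<in> neg_set (k_point z (s j))"
    and lim: "u0 \<longlonglongrightarrow> y0" "u1 \<longlonglongrightarrow> y1" and y: "min y0 y1 < y" "y < max y0 y1"
  shows "X y = z"
proof -
  have "\<forall>\<^sub>F j in sequentially. y \<in> neg_set (k_point z (s j))"
    using eventually_strictly_between[OF lim y]
  proof (rule eventually_mono)
    fix j assume between: "min (u0 j) (u1 j) < y \<and> y < max (u0 j) (u1 j)"
    obtain a c where "neg_set (k_point z (s j)) = {a..c}" using K_p_point[OF z] by blast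
    then show "y \<in> neg_set (k_point z (s j))" using u[of j] between by auto
  qed
  then show ?thesis using X_eq_at_point_limit[OF z s] by blast
qed

lemma excl_sets_near_point_set:
  assumes z: "z \<in> {0..1}"
  shows "\<exists>t\<ge>s. \<forall>b\<in>{0, 1}. \<forall>y\<in>neg_set (k_excl z s b t).
           \<exists>u\<in>neg_set (k_point z s). \<bar>y - u\<bar> < inverse (Suc s)"
proof -
  have "\<forall>\<^sub>F t in sequentially. \<forall>y\<in>neg_set (k_excl z s b t).
          \<exists>u\<in>neg_set (k_point z s). \<bar>y - u\<bar> < inverse (Suc s)" if b: "b \<in> {0, 1}" for b
    using computable_K baire_lim_p_excl_point[of z s b] K_p_point[OF z, THEN conjunct1]
    by (rule computable_neg_set_near[of K]) (simp_all add: K_p_excl[OF z b])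
  then have "\<forall>\<^sub>F t in sequentially. \<forall>b\<in>{0, 1}. \<forall>y\<in>neg_set (k_excl z s b t).
          \<exists>u\<in>neg_set (k_point z s). \<bar>y - u\<bar> < inverse (Suc s)"
    by (intro eventually_ball_finite) auto
  then have "\<forall>\<^sub>F t in sequentially. s \<le> t \<and> (\<forall>b\<in>{0, 1}. \<forall>y\<in>neg_set (k_excl z s b t).
          \<exists>u\<in>neg_set (k_point z s). \<bar>y - u\<bar> < inverse (Suc s))"
    using eventually_ge_at_top by (rule eventually_conj[rotated])
  then show ?thesis using eventually_happens' sequentially_bot by blast
qed

lemma excl_point_sequences:
  assumes z: "z \<in> {0..1}"
  obtains \<tau> w u where "\<And>s. s \<le> \<tau> s"
    and "\<And>b s. b \<in> {0, 1} \<Longrightarrow> w b s \<in> neg_set (k_excl z s b (\<tau> s))"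
    and "\<And>b s. b \<in> {0, 1} \<Longrightarrow> u b s \<in> neg_set (k_point z s) \<and> \<bar>w b s - u b s\<bar> < inverse (Suc s)"
proof -
  from excl_sets_near_point_set[OF z] have "\<forall>s. \<exists>t. s \<le> t \<and> (\<forall>b\<in>{0, 1}.
      \<forall>y\<in>neg_set (k_excl z s b t). \<exists>u\<in>neg_set (k_point z s). \<bar>y - u\<bar> < inverse (Suc s))"
    by blast
  from choice[OF this] obtain \<tau> where \<tau>: "\<And>s. s \<le> \<tau> s" and near: "\<And>s b y. b \<in> {0, 1} \<Longrightarrow>
      y \<in> neg_set (k_excl z s b (\<tau> s)) \<Longrightarrow> \<exists>u\<in>neg_set (k_point z s). \<bar>y - u\<bar> < inverse (Suc s)"
    by blast
  define w where "w b s = (SOME y. y \<in> neg_set (k_excl z s b (\<tau> s)))" for b s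
  define u where "u b s = (SOME u. u \<in> neg_set (k_point z s) \<and> \<bar>w b s - u\<bar> < inverse (Suc s))" for b s
  have w: "w b s \<in> neg_set (k_excl z s b (\<tau> s))" if "b \<in> {0, 1}" for b s
    unfolding w_def using K_p_excl[OF z that] by (simp add: some_in_eq)
  have u: "u b s \<in> neg_set (k_point z s) \<and> \<bar>w b s - u b s\<bar> < inverse (Suc s)" if b: "b \<in> {0, 1}" for b s
    unfolding u_def by (rule someI_ex) (use near[OF b w[OF b]] in blast)
  from \<tau> w u show thesis by (rule that)
qed

lemma X_locally_constant:
  assumes z: "z \<in> {0..1}"
  obtains y0 y1 where "y0 < y1" "\<And>y. y0 < y \<Longrightarrow> y < y1 \<Longrightarrow> X y = z"
proof -
  obtain \<tau> w u where \<tau>: "\<And>s. s \<le> \<tau> s"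
    and w: "\<And>b s. b \<in> {0, 1} \<Longrightarrow> w b s \<in> neg_set (k_excl z s b (\<tau> s))"
    and u: "\<And>b s. b \<in> {0, 1} \<Longrightarrow> u b s \<in> neg_set (k_point z s) \<and> \<bar>w b s - u b s\<bar> < inverse (Suc s)"
    using excl_point_sequences[OF z] by blast
  have "seq_compact ({0..1 :: real} \<times> {0..1 :: real})"
    by (intro compact_imp_seq_compact compact_Times compact_Icc)
  moreover have "\<forall>s. (w 0 s, w 1 s) \<in> {0..1} \<times> {0..1}"
    using w neg_set_subset by blast
  ultimately obtain l \<phi> where \<phi>: "strict_mono \<phi>" and lim: "((\<lambda>s. (w 0 s, w 1 s)) \<circ> \<phi>) \<longlonglongrightarrow> l"
    by (rule seq_compactE)
  define y0 y1 where "y0 = fst l" and "y1 = snd l"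
  have lim_w: "(\<lambda>j. w 0 (\<phi> j)) \<longlonglongrightarrow> y0" "(\<lambda>j. w 1 (\<phi> j)) \<longlonglongrightarrow> y1"
    using tendsto_fst[OF lim] tendsto_snd[OF lim] by (simp_all add: y0_def y1_def comp_def)
  have s: "j \<le> \<phi> j" for j using \<phi> by (rule strict_mono_imp_increasing)
  have lim_u: "(\<lambda>j. u b (\<phi> j)) \<longlonglongrightarrow> y" if b: "b \<in> {0, 1}" and "(\<lambda>j. w b (\<phi> j)) \<longlonglongrightarrow> y" for b y
  proof (rule LIMSEQ_close[OF that(2)])
    fix j
    have "\<bar>u b (\<phi> j) - w b (\<phi> j)\<bar> < inverse (real (Suc (\<phi> j)))"
      using u[OF b] by (simp add: abs_minus_commute)
    also have "\<dots> \<le> inverse (real (Suc j))" using s[of j] by (simp add: le_imp_inverse_le)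
    finally show "\<bar>u b (\<phi> j) - w b (\<phi> j)\<bar> \<le> inverse (real (Suc j))" by simp
  qed
  have "y0 \<in> neg_set k_full \<and> out_full y0 0 \<noteq> 0"
    using w s \<tau> lim_w(1) by (intro bit_at_excl_limit[of z 0 \<phi> "\<lambda>j. \<tau> (\<phi> j)" "\<lambda>j. w 0 (\<phi> j)"] z) auto
  moreover have "y1 \<in> neg_set k_full \<and> out_full y1 0 \<noteq> 1"
    using w s \<tau> lim_w(2) by (intro bit_at_excl_limit[of z 1 \<phi> "\<lambda>j. \<tau> (\<phi> j)" "\<lambda>j. w 1 (\<phi> j)"] z) auto
  ultimately have "y0 \<noteq> y1" using out_full by force
  show ?thesis
  proof
    show "min y0 y1 < max y0 y1" using \<open>y0 \<noteq> y1\<close> by linarith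
    fix y assume "min y0 y1 < y" "y < max y0 y1"
    with z s u lim_u[OF _ lim_w(1)] lim_u[OF _ lim_w(2)] show "X y = z"
      by (intro X_eq_between_point_limits[of z \<phi> "\<lambda>j. u 0 (\<phi> j)" "\<lambda>j. u 1 (\<phi> j)" y0 y1]) auto
  qed
qed

lemma reduction_absurd: False
proof -
  have "{0..1} \<subseteq> X ` \<rat>"
  proof
    fix z :: real assume "z \<in> {0..1}"
    then obtain y0 y1 where "y0 < y1" and X: "\<And>y. y0 < y \<Longrightarrow> y < y1 \<Longrightarrow> X y = z"
      using X_locally_constant by blast
    then obtain q where "q \<in> \<rat>" "y0 < q" "q < y1" using Rats_dense_in_real by blast
    with X show "z \<in> X ` \<rat>" by force
  qed
  then have "countable {0..1 :: real}" by (rule countable_subset) (intro countable_image countable_rat)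
  then show False using uncountable_closed_interval[of "0 :: real" 1] by simp
qed

end

theorem proposition17p3:
  shows "\<not> weihrauch_le (rep_prod delta_A2 delta_AI) (rep_prod delta_2 delta_I) (mv_prod C2 AUC_I)
                        delta_AI delta_I ConC_I"
proof
  assume "weihrauch_le (rep_prod delta_A2 delta_AI) (rep_prod delta_2 delta_I) (mv_prod C2 AUC_I)
                        delta_AI delta_I ConC_I"
  then obtain H K where "ConC_reduction H K"
    unfolding weihrauch_le_def ConC_reduction_def by blast
  then show False by (rule ConC_reduction.reduction_absurd)
qed

end
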